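(* Let $\Delta=\{z\in\mathbb{C}:|z|<1\}$, let $\alpha\in[0,1)$ and let $\beta\in\mathbb{C}$ with $\mathrm{Re}\{\beta\}>-1/2$. Let $f(z)=z|z|^{2\beta}h(z)\overline{g(z)}$ be a log-harmonic mapping in $\Delta$, where $h,g$ are analytic and non-vanishing in $\Delta$ with $h(0)=g(0)=1$. Then $f\in\mathcal{S}^*_{LH}(\alpha)$ if and only if there exists a Schwarz function $\psi$ such that $$h(z)=g(z)\exp\left(\int_0^z\frac{2(1-\alpha)\psi(t)}{t(1-\psi(t))}\,dt\right)\qquad(z\in\Delta).$$
   Context: A Schwarz function is an analytic $\psi$ in $\Delta$ with $\psi(0)=0$ and $|\psi(z)|\le|z|$. A mapping $f$ is log-harmonic in $\Delta$ if there is an analytic $w$ in $\Delta$ with $|w(z)|<1$ such that $\overline{f_{\bar z}}/\overline{f}=w\,f_z/f$. For $0\le\alpha<1$, $\mathcal{S}^*_{LH}(\alpha)$ is the set of log-harmonic mappings $f(z)=z|z|^{2\beta}h(z)\overline{g(z)}$ with $h(0)=g(0)=1$ satisfying $\mathrm{Re}\left\{\frac{zf_z-\bar z f_{\bar z}}{f}\right\}>\alpha$ for all $z\in\Delta$. *)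

theory Defs
  imports "HOL-Complex_Analysis.Complex_Analysis"
begin

definition wirt_z :: "(complex \<Rightarrow> complex) \<Rightarrow> complex \<Rightarrow> complex" where
  "wirt_z f z = (frechet_derivative f (at z) 1 - \<i> * frechet_derivative f (at z) \<i>) / 2"

definition wirt_zbar :: "(complex \<Rightarrow> complex) \<Rightarrow> complex \<Rightarrow> complex" where
  "wirt_zbar f z = (frechet_derivative f (at z) 1 + \<i> * frechet_derivative f (at z) \<i>) / 2"

definition schwarz_function :: "(complex \<Rightarrow> complex) \<Rightarrow> bool" where
  "schwarz_function \<psi> \<longleftrightarrow> \<psi> holomorphic_on ball 0 1 \<and> \<psi> 0 = 0 \<and>
     (\<forall>z\<in>ball 0 1. norm (\<psi> z) \<le> norm z)"

text \<open>The equation is required at the points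
  of the punctured disc (f vanishes at the origin for the mappings considered).\<close>
definition log_harmonic :: "(complex \<Rightarrow> complex) \<Rightarrow> bool" where
  "log_harmonic f \<longleftrightarrow> (\<exists>w. w holomorphic_on ball 0 1 \<and> (\<forall>z\<in>ball 0 1. norm (w z) < 1) \<and>
     (\<forall>z\<in>ball 0 1 - {0}. f differentiable (at z) \<and>
        cnj (wirt_zbar f z) / cnj (f z) = w z * wirt_z f z / f z))"

definition starlike_LH :: "real \<Rightarrow> (complex \<Rightarrow> complex) \<Rightarrow> bool" where
  "starlike_LH \<alpha> f \<longleftrightarrow> log_harmonic f \<and>
     (\<exists>\<beta> h g. Re \<beta> > -1/2 \<and> h holomorphic_on ball 0 1 \<and> g holomorphic_on ball 0 1 \<and>
        (\<forall>z\<in>ball 0 1. h z \<noteq> 0 \<and> g z \<noteq> 0) \<and> h 0 = 1 \<and> g 0 = 1 \<and>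
        (\<forall>z\<in>ball 0 1. f z = z * (complex_of_real (norm z)) powr (2 * \<beta>) * h z * cnj (g z))) \<and>
     (\<forall>z\<in>ball 0 1 - {0}. Re ((z * wirt_z f z - cnj z * wirt_zbar f z) / f z) > \<alpha>)"

end

theory Submission
  imports Defs
begin

text \<open>For \<open>f = z |z|^(2\<beta>) h conj(g)\<close> one computes
  \<open>(z f_z - conj(z) f_zbar) / f = 1 + z h'/h - conj(z g'/g)\<close>, whose real part is
  \<open>1 + Re (z p'/p)\<close> for \<open>p = h/g\<close>. So \<open>f\<close> is starlike of order \<open>\<alpha>\<close> iff \<open>z p'/p\<close> takes
  values in the half-plane \<open>Re w > \<alpha> - 1\<close>, which the Moebius map \<open>w \<mapsto> w / (w + 2(1 - \<alpha>))\<close>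
  carries onto the unit disc. Hence the condition says exactly \<open>z p'/p = 2(1 - \<alpha>) \<psi> / (1 - \<psi>)\<close>
  for a Schwarz function \<open>\<psi>\<close>, and integrating the logarithmic derivative \<open>p'/p\<close> from
  \<open>p(0) = 1\<close> turns this into the exponential formula for \<open>h/g\<close>.\<close>

lemma wirtinger_of_has_derivative:
  fixes f :: "complex \<Rightarrow> complex"
  assumes "(f has_derivative (\<lambda>v. A * v + B * cnj v)) (at z)"
  shows "wirt_z f z = A" and "wirt_zbar f z = B"
  by (simp_all add: wirt_z_def wirt_zbar_def algebra_simps flip: frechet_derivative_at[OF assms])

lemma has_derivative_norm_powr:
  fixes z \<beta> :: complex
  assumes "z \<noteq> 0"
  shows "((\<lambda>w. of_real (norm w) powr (2 * \<beta>)) has_derivative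
           (\<lambda>v. of_real (norm z) powr (2 * \<beta>) * \<beta> * (v / z + cnj v / cnj z))) (at z)"
proof -
  have powr_exp: "of_real (norm w) powr (2 * \<beta>) = exp (\<beta> * of_real (ln (norm w ^ 2)))"
    if "w \<noteq> 0" for w :: complex
    using that by (simp add: powr_def Ln_of_real ln_realpow mult.assoc mult.left_commute)
  have inner: "complex_of_real (2 * (z \<bullet> v) / norm z ^ 2) = v / z + cnj v / cnj z" for v
  proof -
    have "complex_of_real (norm z ^ 2) = z * cnj z" by (metis complex_norm_square of_real_power)
    moreover have "complex_of_real (2 * (z \<bullet> v)) = cnj z * v + z * cnj v"
      by (simp add: complex_eq_iff inner_complex_def algebra_simps)
    ultimately show ?thesis using assms by (simp add: field_simps del: of_real_power)
  qed
  have "norm z ^ 2 > 0" using assms by simp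
  then have "((\<lambda>w. ln (norm w ^ 2)) has_derivative (\<lambda>v. 2 * (z \<bullet> v) / norm z ^ 2)) (at z)"
    using has_derivative_compose[OF has_derivative_sqnorm_at[of z]
        has_field_derivative_imp_has_derivative[OF DERIV_ln]] by (simp add: field_simps)
  then have "((\<lambda>w. \<beta> * of_real (ln (norm w ^ 2))) has_derivative
               (\<lambda>v. \<beta> * (v / z + cnj v / cnj z))) (at z)"
    unfolding inner[symmetric] by (intro has_derivative_mult_right has_derivative_of_real)
  from has_derivative_compose[OF this
      has_field_derivative_imp_has_derivative[OF DERIV_exp]]
  have "((\<lambda>w. exp (\<beta> * of_real (ln (norm w ^ 2)))) has_derivative
           (\<lambda>v. of_real (norm z) powr (2 * \<beta>) * \<beta> * (v / z + cnj v / cnj z))) (at z)"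
    using powr_exp[OF assms] by (simp add: ac_simps)
  then show ?thesis
    by (rule has_derivative_transform_within_open[where s = "- {0}"]) (use assms powr_exp in auto)
qed

lemma wirtinger_starlike_quotient:
  fixes \<beta> :: complex and f h g :: "complex \<Rightarrow> complex"
  assumes S: "open S" and hol: "h holomorphic_on S" "g holomorphic_on S"
    and f: "\<forall>w\<in>S. f w = w * of_real (norm w) powr (2 * \<beta>) * h w * cnj (g w)"
    and z: "z \<in> S" "z \<noteq> 0" and nz: "h z \<noteq> 0" "g z \<noteq> 0"
  shows "(z * wirt_z f z - cnj z * wirt_zbar f z) / f z
     = 1 + z * deriv h z / h z - cnj (z * deriv g z / g z)"
proof -
  define N :: complex where "N = of_real (norm z) powr (2 * \<beta>)"
  have N: "N \<noteq> 0" using z by (simp add: N_def)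
  have hd: "(h has_derivative (\<lambda>v. deriv h z * v)) (at z)"
    and gd: "(g has_derivative (\<lambda>v. deriv g z * v)) (at z)"
    using hol z S
    by (auto intro!: has_field_derivative_imp_has_derivative holomorphic_on_imp_differentiable_at
        DERIV_deriv_iff_field_differentiable[THEN iffD2])
  define A where "A = N * h z * cnj (g z) * (1 + \<beta>) + z * N * deriv h z * cnj (g z)"
  define B where "B = z * N * \<beta> * h z * cnj (g z) / cnj z + z * N * h z * cnj (deriv g z)"
  have "((\<lambda>w. w * of_real (norm w) powr (2 * \<beta>) * h w * cnj (g w)) has_derivative
          (\<lambda>v. A * v + B * cnj v)) (at z)"
    unfolding A_def B_def N_def
    by (rule has_derivative_eq_rhs,
        (rule has_derivative_mult has_derivative_ident has_derivative_norm_powr[OF z(2)] hd gd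
          has_derivative_cnj)+)
       (use z(2) in \<open>simp add: fun_eq_iff field_simps\<close>)
  then have "(f has_derivative (\<lambda>v. A * v + B * cnj v)) (at z)"
    by (rule has_derivative_transform_within_open[OF _ S z(1)]) (use f in auto)
  then have "(z * wirt_z f z - cnj z * wirt_zbar f z) / f z
      = (z * A - cnj z * B) / (z * N * h z * cnj (g z))"
    using f z by (simp add: wirtinger_of_has_derivative N_def)
  also have "\<dots> = 1 + z * deriv h z / h z - cnj (z * deriv g z / g z)"
    using z nz N by (simp add: A_def B_def field_simps)
  finally show ?thesis .
qed

lemma starlike_LH_iff_Re_log_deriv:
  fixes \<alpha> :: real and \<beta> :: complex and f h g :: "complex \<Rightarrow> complex"
  assumes "\<alpha> < 1" and "Re \<beta> > -1/2"
    and hol: "h holomorphic_on ball 0 1" "g holomorphic_on ball 0 1"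
    and nz: "\<forall>z\<in>ball 0 1. h z \<noteq> 0 \<and> g z \<noteq> 0"
    and "h 0 = 1" and "g 0 = 1"
    and f: "\<forall>z\<in>ball 0 1. f z = z * (complex_of_real (norm z)) powr (2 * \<beta>) * h z * cnj (g z)"
    and "log_harmonic f"
  shows "starlike_LH \<alpha> f \<longleftrightarrow>
    (\<forall>z\<in>ball 0 1. Re (z * (deriv h z / h z - deriv g z / g z)) > \<alpha> - 1)"
proof -
  define L where "L z = deriv h z / h z - deriv g z / g z" for z
  have "Re ((z * wirt_z f z - cnj z * wirt_zbar f z) / f z) = 1 + Re (z * L z)"
    if "z \<in> ball 0 1 - {0}" for z
    using wirtinger_starlike_quotient[OF open_ball hol f] that nz
    by (simp add: L_def right_diff_distrib del: complex_cnj_mult complex_cnj_divide)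
  moreover have "\<exists>\<beta> h g. Re \<beta> > -1/2 \<and> h holomorphic_on ball 0 1 \<and> g holomorphic_on ball 0 1 \<and>
      (\<forall>z\<in>ball 0 1. h z \<noteq> 0 \<and> g z \<noteq> 0) \<and> h 0 = 1 \<and> g 0 = 1 \<and>
      (\<forall>z\<in>ball 0 1. f z = z * (complex_of_real (norm z)) powr (2 * \<beta>) * h z * cnj (g z))"
    using assms(2-8) by blast
  ultimately have "starlike_LH \<alpha> f \<longleftrightarrow> (\<forall>z\<in>ball 0 1 - {0}. 1 + Re (z * L z) > \<alpha>)"
    using assms(9) unfolding starlike_LH_def by simp
  also have "\<dots> \<longleftrightarrow> (\<forall>z\<in>ball 0 1. Re (z * L z) > \<alpha> - 1)"
  proof -
    have "Re (z * L z) > \<alpha> - 1 \<longleftrightarrow> z = 0 \<or> 1 + Re (z * L z) > \<alpha>" for z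
      using assms(1) by (cases "z = 0") auto
    then show ?thesis by blast
  qed
  finally show ?thesis
    by (simp only: L_def)
qed

lemma deriv_divide_eq_log_deriv:
  fixes h g :: "complex \<Rightarrow> complex"
  assumes "open S" "h holomorphic_on S" "g holomorphic_on S" "\<forall>z\<in>S. h z \<noteq> 0 \<and> g z \<noteq> 0"
    and "z \<in> S"
  shows "deriv (\<lambda>w. h w / g w) z = h z / g z * (deriv h z / h z - deriv g z / g z)"
  using assms
  by (auto simp: deriv_divide holomorphic_on_imp_differentiable_at field_simps power2_eq_square)

lemma Re_div_one_minus_gt:
  fixes s :: complex
  assumes "norm s < 1"
  shows "Re (s / (1 - s)) > -1/2"
proof -
  define a where "a = Re s"
  define b where "b = Im s"
  have "(norm s)\<^sup>2 < 1" using assms by (simp add: abs_square_less_1)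
  then have ab: "a\<^sup>2 + b\<^sup>2 < 1" by (simp add: a_def b_def cmod_power2)
  then have "a\<^sup>2 < 1" by (smt (verit) zero_le_power2)
  then have "1 - a \<noteq> 0" by auto
  then have den: "(1 - a)\<^sup>2 + b\<^sup>2 > 0" by (simp add: add_pos_nonneg)
  have "-1/2 * ((1 - a)\<^sup>2 + b\<^sup>2) < a * (1 - a) - b * b"
    using ab by (simp add: power2_eq_square algebra_simps)
  then have "-1/2 < (a * (1 - a) - b * b) / ((1 - a)\<^sup>2 + b\<^sup>2)"
    using den by (simp add: pos_less_divide_eq)
  then show ?thesis by (simp add: Re_divide a_def b_def)
qed

lemma norm_less_norm_add_of_real:
  fixes w :: complex and c :: real
  assumes "c > 0" and "Re w > - c / 2"
  shows "norm w < norm (w + of_real c)"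
proof -
  have "(norm (w + of_real c))\<^sup>2 = (norm w)\<^sup>2 + c * (2 * Re w + c)"
    by (simp only: cmod_power2) (simp add: power2_eq_square algebra_simps)
  moreover have "0 < c * (2 * Re w + c)" using assms by (intro mult_pos_pos) auto
  ultimately have "(norm w)\<^sup>2 < (norm (w + of_real c))\<^sup>2" by linarith
  then show ?thesis by (rule power2_less_imp_less) simp
qed

lemma Re_gt_iff_schwarz_quotient:
  fixes c :: real and q :: "complex \<Rightarrow> complex"
  assumes c: "c > 0" and q: "q holomorphic_on ball 0 1"
  shows "(\<forall>z\<in>ball 0 1. Re (z * q z) > - c / 2) \<longleftrightarrow>
    (\<exists>\<psi>. schwarz_function \<psi> \<and> (\<forall>z\<in>ball 0 1 - {0}. q z = of_real c * \<psi> z / (z * (1 - \<psi> z))))"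
    (is "?lhs \<longleftrightarrow> ?rhs")
proof
  assume Re_gt: "\<forall>z\<in>ball 0 1. Re (z * q z) > - c / 2"
  have nz: "z * q z + of_real c \<noteq> 0" if "z \<in> ball 0 1" for z
  proof -
    have "Re (z * q z) > - c / 2" using Re_gt that by blast
    then have "Re (z * q z + of_real c) > 0" using c by simp
    then show ?thesis by force
  qed
  define \<psi> where "\<psi> z = z * q z / (z * q z + of_real c)" for z
  have "\<psi> holomorphic_on ball 0 1"
    unfolding \<psi>_def using nz q by (intro holomorphic_intros) auto
  moreover have "norm (\<psi> z) < 1" if "norm z < 1" for z
    using norm_less_norm_add_of_real[OF c, of "z * q z"] Re_gt nz that
    by (simp add: \<psi>_def norm_divide divide_less_eq)
  ultimately have "schwarz_function \<psi>"
    unfolding schwarz_function_def using Schwarz_Lemma(1)[of \<psi>] by (auto simp: \<psi>_def)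
  moreover have "q z = of_real c * \<psi> z / (z * (1 - \<psi> z))" if "z \<in> ball 0 1 - {0}" for z
  proof -
    have "1 - \<psi> z = of_real c / (z * q z + of_real c)"
      using that nz[of z] by (simp add: \<psi>_def field_simps)
    then show ?thesis using that nz[of z] c by (simp add: \<psi>_def)
  qed
  ultimately show ?rhs
    by blast
next
  assume ?rhs
  then obtain \<psi> where \<psi>: "schwarz_function \<psi>"
    and q_eq: "\<forall>z\<in>ball 0 1 - {0}. q z = of_real c * \<psi> z / (z * (1 - \<psi> z))" by blast
  show ?lhs
  proof
    fix z :: complex assume z: "z \<in> ball 0 1"
    show "Re (z * q z) > - c / 2"
    proof (cases "z = 0")
      case False
      have "norm (\<psi> z) < 1" using \<psi> z unfolding schwarz_function_def by force
      then have "Re (\<psi> z / (1 - \<psi> z)) > -1/2" "1 - \<psi> z \<noteq> 0"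
        using Re_div_one_minus_gt by auto
      moreover have "z * q z = c *\<^sub>R (\<psi> z / (1 - \<psi> z))"
        using q_eq z False by (simp add: scaleR_conv_of_real)
      ultimately show ?thesis using mult_strict_left_mono[OF _ c] by fastforce
    qed (use c in simp)
  qed
qed

lemma continuous_on_eq_at_puncture:
  fixes f g :: "'a::{perfect_space,t2_space} \<Rightarrow> 'b::t2_space"
  assumes "open S" "a \<in> S" "continuous_on S f" "continuous_on S g"
    and "\<forall>z\<in>S - {a}. f z = g z"
  shows "f a = g a"
proof -
  have "isCont f a" "isCont g a"
    using assms(1-4) by (auto simp: continuous_on_eq_continuous_at)
  then have f: "(f \<longlongrightarrow> f a) (at a)" and g: "(g \<longlongrightarrow> g a) (at a)"
    by (simp_all add: isCont_def)
  have "eventually (\<lambda>z. z \<in> S - {a}) (at a)"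
    using assms(1,2) eventually_at_topological by blast
  then have "eventually (\<lambda>z. g z = f z) (at a)"
    by eventually_elim (use assms(5) in auto)
  with g have "(f \<longlongrightarrow> g a) (at a)" by (rule Lim_transform_eventually)
  with f show ?thesis by (rule tendsto_unique[OF trivial_limit_at])
qed

lemma contour_integral_linepath_primitive_spike:
  fixes k r R :: "complex \<Rightarrow> complex"
  assumes S: "convex S" and R: "\<And>x. x \<in> S \<Longrightarrow> (R has_field_derivative r x) (at x within S)"
    and k: "\<forall>t\<in>S - {a}. k t = r t" and a: "a \<in> S" and z: "z \<in> S"
  shows "contour_integral (linepath a z) k = R z - R a"
proof (cases "z = a")
  case False
  have sub: "path_image (linepath a z) \<subseteq> S"
    using S a z by (simp add: closed_segment_subset)
  have "contour_integral (linepath a z) k = contour_integral (linepath a z) r"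
    by (rule contour_integral_spike_finite_simple_path[where A = "{a}"]) (use False sub k in auto)
  also have "\<dots> = R z - R a"
    using contour_integral_primitive[OF R _ sub] by (simp add: contour_integral_unique)
  finally show ?thesis .
qed simp

lemma exp_primitive_iff_deriv:
  fixes p r R :: "complex \<Rightarrow> complex"
  assumes S: "convex S" "open S" "a \<in> S" and p: "p holomorphic_on S" "p a = 1"
    and R: "\<And>x. x \<in> S \<Longrightarrow> (R has_field_derivative r x) (at x within S)"
  shows "(\<forall>z\<in>S. p z = exp (R z - R a)) \<longleftrightarrow> (\<forall>z\<in>S. deriv p z = p z * r z)"
proof
  assume p_exp: "\<forall>z\<in>S. p z = exp (R z - R a)"
  show "\<forall>z\<in>S. deriv p z = p z * r z"
  proof
    fix z assume z: "z \<in> S"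
    have "((\<lambda>x. exp (R x - R a)) has_field_derivative exp (R z - R a) * r z) (at z)"
      using DERIV_chain2[OF DERIV_exp DERIV_diff[OF R[OF z] DERIV_const]]
      by (simp add: at_within_open[OF z S(2)])
    then have "(p has_field_derivative exp (R z - R a) * r z) (at z)"
      by (rule has_field_derivative_transform_within_open[OF _ S(2) z]) (use p_exp in simp)
    then show "deriv p z = p z * r z"
      using p_exp z by (simp add: DERIV_imp_deriv)
  qed
next
  assume p_deriv: "\<forall>z\<in>S. deriv p z = p z * r z"
  have "\<exists>C. \<forall>x\<in>S. p x * exp (- R x) = C"
  proof (rule has_field_derivative_zero_constant[OF S(1)])
    fix x assume x: "x \<in> S"
    have "p field_differentiable at x"
      using p(1) S(2) x by (rule holomorphic_on_imp_differentiable_at)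
    then have "(p has_field_derivative deriv p x) (at x)"
      by (simp add: DERIV_deriv_iff_field_differentiable)
    then have "(p has_field_derivative p x * r x) (at x within S)"
      using p_deriv x by (auto intro: has_field_derivative_at_within)
    from DERIV_mult[OF this DERIV_chain2[OF DERIV_exp DERIV_minus[OF R[OF x]]]]
    show "((\<lambda>x. p x * exp (- R x)) has_field_derivative 0) (at x within S)"
      by (simp add: algebra_simps)
  qed
  then obtain C where C: "\<And>x. x \<in> S \<Longrightarrow> p x * exp (- R x) = C" by blast
  have "p z * exp (- R z) = exp (- R a)" if "z \<in> S" for z
    using C[OF that] C[OF S(3)] p(2) by simp
  then show "\<forall>z\<in>S. p z = exp (R z - R a)"
    by (simp add: exp_minus exp_diff field_simps)
qed

lemma exp_contour_integral_iff_deriv: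
  fixes p k r :: "complex \<Rightarrow> complex"
  assumes S: "convex S" "open S" "a \<in> S" and p: "p holomorphic_on S" "p a = 1"
    and r: "r holomorphic_on S" and k: "\<forall>t\<in>S - {a}. k t = r t"
  shows "(\<forall>z\<in>S. p z = exp (contour_integral (linepath a z) k))
     \<longleftrightarrow> (\<forall>z\<in>S. deriv p z = p z * r z)"
proof -
  obtain R where R: "\<And>x. x \<in> S \<Longrightarrow> (R has_field_derivative r x) (at x within S)"
    using holomorphic_convex_primitive'[OF S(1,2) r] by blast
  have "contour_integral (linepath a z) k = R z - R a" if "z \<in> S" for z
    using contour_integral_linepath_primitive_spike[OF S(1) R k S(3) that] .
  then show ?thesis
    using exp_primitive_iff_deriv[OF S p R] by simp
qed

text \<open>The integrand \<open>C \<psi>(t) / (t (1 - \<psi>(t)))\<close> takes the junk value \<open>0\<close> at \<open>t = 0\<close>;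
  what matters for integration along segments from \<open>0\<close> is that it agrees off \<open>0\<close> with a
  holomorphic function.\<close>

lemma schwarz_quotient_removable:
  fixes C :: complex
  assumes "schwarz_function \<psi>"
  obtains r where "r holomorphic_on ball 0 1"
    and "\<forall>t\<in>ball 0 1 - {0}. r t = C * \<psi> t / (t * (1 - \<psi> t))"
proof
  have \<psi>: "\<psi> holomorphic_on ball 0 1" "\<psi> 0 = 0"
    and \<psi>_le: "\<forall>z\<in>ball 0 1. norm (\<psi> z) \<le> norm z"
    using assms unfolding schwarz_function_def by blast+
  have ne1: "1 - \<psi> z \<noteq> 0" if "z \<in> ball 0 1" for z
  proof -
    have "norm (\<psi> z) < norm (1::complex)" using \<psi>_le that by fastforce
    then show ?thesis by auto
  qed
  define \<phi> where "\<phi> z = (if z = 0 then deriv \<psi> 0 else (\<psi> z - \<psi> 0) / (z - 0))" for z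
  have "\<phi> holomorphic_on ball 0 1"
    unfolding \<phi>_def[abs_def] by (rule pole_lemma_open[OF \<psi>(1) open_ball])
  then show "(\<lambda>t. C * \<phi> t / (1 - \<psi> t)) holomorphic_on ball 0 1"
    using \<psi>(1) ne1 by (intro holomorphic_intros) auto
  show "\<forall>t\<in>ball 0 1 - {0}. C * \<phi> t / (1 - \<psi> t) = C * \<psi> t / (t * (1 - \<psi> t))"
    using \<psi>(2) by (simp add: \<phi>_def)
qed

lemma log_deriv_eq_iff_exp_contour_integral:
  fixes p q k r :: "complex \<Rightarrow> complex"
  assumes S: "convex S" "open S" "a \<in> S"
    and p: "p holomorphic_on S" "p a = 1" "\<forall>z\<in>S. p z \<noteq> 0"
    and q: "q holomorphic_on S" "\<forall>z\<in>S. deriv p z = p z * q z"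
    and r: "r holomorphic_on S" and k: "\<forall>t\<in>S - {a}. k t = r t"
  shows "(\<forall>z\<in>S - {a}. q z = k z) \<longleftrightarrow> (\<forall>z\<in>S. p z = exp (contour_integral (linepath a z) k))"
proof -
  have "(\<forall>z\<in>S - {a}. q z = k z) \<longleftrightarrow> (\<forall>z\<in>S. q z = r z)"
    using continuous_on_eq_at_puncture[OF S(2,3) holomorphic_on_imp_continuous_on[OF q(1)]
        holomorphic_on_imp_continuous_on[OF r]] k by auto
  also have "\<dots> \<longleftrightarrow> (\<forall>z\<in>S. deriv p z = p z * r z)"
    using p(3) q(2) by auto
  also have "\<dots> \<longleftrightarrow> (\<forall>z\<in>S. p z = exp (contour_integral (linepath a z) k))"
    using exp_contour_integral_iff_deriv[OF S p(1,2) r k] by simp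
  finally show ?thesis .
qed

lemma log_deriv_eq_schwarz_quotient_iff:
  fixes p q \<psi> :: "complex \<Rightarrow> complex" and C :: complex
  assumes p: "p holomorphic_on ball 0 1" "p 0 = 1" "\<forall>z\<in>ball 0 1. p z \<noteq> 0"
    and q: "q holomorphic_on ball 0 1" "\<forall>z\<in>ball 0 1. deriv p z = p z * q z"
    and \<psi>: "schwarz_function \<psi>"
  shows "(\<forall>z\<in>ball 0 1 - {0}. q z = C * \<psi> z / (z * (1 - \<psi> z))) \<longleftrightarrow>
    (\<forall>z\<in>ball 0 1. p z = exp (contour_integral (linepath 0 z) (\<lambda>t. C * \<psi> t / (t * (1 - \<psi> t)))))"
proof -
  obtain r where r: "r holomorphic_on ball 0 1"
    and r_eq: "\<forall>t\<in>ball 0 1 - {0}. r t = C * \<psi> t / (t * (1 - \<psi> t))"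
    using schwarz_quotient_removable[OF \<psi>] by blast
  show ?thesis
    using r_eq by (intro log_deriv_eq_iff_exp_contour_integral[OF convex_ball open_ball _ p q r]) auto
qed

theorem mainTheorem3:
  fixes \<alpha> :: real and \<beta> :: complex and f h g :: "complex \<Rightarrow> complex"
  assumes "0 \<le> \<alpha>" and "\<alpha> < 1"
    and "Re \<beta> > -1/2"
    and "h holomorphic_on ball 0 1" and "g holomorphic_on ball 0 1"
    and "\<forall>z\<in>ball 0 1. h z \<noteq> 0 \<and> g z \<noteq> 0"
    and "h 0 = 1" and "g 0 = 1"
    and "\<forall>z\<in>ball 0 1. f z = z * (complex_of_real (norm z)) powr (2 * \<beta>) * h z * cnj (g z)"
    and "log_harmonic f"
  shows "starlike_LH \<alpha> f \<longleftrightarrow>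
    (\<exists>\<psi> :: complex \<Rightarrow> complex. schwarz_function \<psi> \<and>
       (\<forall>z\<in>ball 0 1. h z = g z * exp (contour_integral (linepath 0 z)
          (\<lambda>t. 2 * (1 - complex_of_real \<alpha>) * \<psi> t / (t * (1 - \<psi> t))))))"
proof -
  define c where "c = 2 * (1 - \<alpha>)"
  define p where "p z = h z / g z" for z
  define q where "q z = deriv h z / h z - deriv g z / g z" for z
  have c: "c > 0" "- c / 2 = \<alpha> - 1" "2 * (1 - complex_of_real \<alpha>) = of_real c"
    using assms(2) by (simp_all add: c_def)
  have p: "p holomorphic_on ball 0 1" "p 0 = 1" "\<forall>z\<in>ball 0 1. p z \<noteq> 0"
    using assms(4-8) unfolding p_def by (auto intro!: holomorphic_intros)
  have q: "q holomorphic_on ball 0 1" "\<forall>z\<in>ball 0 1. deriv p z = p z * q z"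
    using assms(4-6) deriv_divide_eq_log_deriv[OF open_ball] unfolding p_def[abs_def] q_def
    by (auto intro!: holomorphic_intros)
  have h_iff_p: "h z = g z * exp w \<longleftrightarrow> p z = exp w" if "z \<in> ball 0 1" for z w
    using assms(6) that by (auto simp: p_def field_simps)
  have "starlike_LH \<alpha> f \<longleftrightarrow> (\<forall>z\<in>ball 0 1. Re (z * q z) > - c / 2)"
    unfolding c(2) q_def by (rule starlike_LH_iff_Re_log_deriv[OF assms(2-10)])
  also have "\<dots> \<longleftrightarrow> (\<exists>\<psi>. schwarz_function \<psi> \<and>
      (\<forall>z\<in>ball 0 1 - {0}. q z = of_real c * \<psi> z / (z * (1 - \<psi> z))))"
    by (rule Re_gt_iff_schwarz_quotient[OF c(1) q(1)])
  also have "\<dots> \<longleftrightarrow> (\<exists>\<psi>. schwarz_function \<psi> \<and> (\<forall>z\<in>ball 0 1.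
      p z = exp (contour_integral (linepath 0 z) (\<lambda>t. of_real c * \<psi> t / (t * (1 - \<psi> t))))))"
    using log_deriv_eq_schwarz_quotient_iff[OF p q] by blast
  finally show ?thesis
    unfolding c(3) by (simp add: h_iff_p)
qed

end
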